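(* Let $M$ be a duplicial module in a pre-additive category. For all $n\ge0$, $$\kappa_n=1-b_{n+1}d_n-d_{n-1}b_n .$$
   Context: Let $\mathcal A$ be a pre-additive category. Let $\Lambda_+$ be the category with objects $[n]$, $n\ge0$, where $\Lambda_+([m],[n])$ is the set of weakly monotone $f:\mathbb Z\to\mathbb Z$ with $f(j+m+1)=f(j)+n+1$ for all $j$ and $f(0)\ge0$ (determined by values on $\{0,\dots,m\}$). Define $\varepsilon^n_i:[n-1]\to[n]$ ($n\ge1$, $0\le i\le n$) by $\varepsilon^n_i(j)=j$ for $0\le j<i$, $j+1$ for $i\le j\le n-1$, and $\eta^n_i:[n+1]\to[n]$ ($0\le i\le n+1$) by $\eta^n_i(j)=j$ for $0\le j\le i$, $j-1$ for $i<j\le n+1$. A duplicial module is a functor $M:\Lambda_+^{op}\to\mathcal A$; $M_n=M([n])$, $\partial_{n,i}=M(\varepsilon^n_i):M_n\to M_{n-1}$, $s_{n,i}=M(\eta^n_i):M_n\to M_{n+1}$. Convention $M_{-1}=0$, maps into/out of it zero. Define $b_n=\sum_{i=0}^n(-1)^i\partial_{n,i}$ ($b_0=0$), $d_n=\sum_{i=0}^{n+1}(-1)^is_{n,i}$ ($d_{-1}=0$), and the Karoubi operator $\kappa_n=(-1)^n(\partial_{n+1,0}s_{n,n+1}-s_{n-1,n}\partial_{n,0}):M_n\to M_n$ (so $\kappa_0=\partial_{1,0}s_{0,1}$). *)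

theory Defs
  imports Main
begin

(* A pre-additive category, given by hom-sets, composition, identities and
   an abelian group structure (add, zero, negation) on each hom-set,
   with composition bilinear. cmp g f = g o f. *)
record ('o,'m) preadd_cat =
  Hom :: "'o \<Rightarrow> 'o \<Rightarrow> 'm set"
  cmp :: "'m \<Rightarrow> 'm \<Rightarrow> 'm"
  idm :: "'o \<Rightarrow> 'm"
  add :: "'m \<Rightarrow> 'm \<Rightarrow> 'm"
  zer :: "'o \<Rightarrow> 'o \<Rightarrow> 'm"
  neg :: "'m \<Rightarrow> 'm"

definition preadditive :: "('o,'m) preadd_cat \<Rightarrow> bool" where
  "preadditive C \<longleftrightarrow>
    (\<forall>a b c f g. f \<in> Hom C a b \<longrightarrow> g \<in> Hom C b c \<longrightarrow> cmp C g f \<in> Hom C a c) \<and>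
    (\<forall>a b c d f g h. f \<in> Hom C a b \<longrightarrow> g \<in> Hom C b c \<longrightarrow> h \<in> Hom C c d \<longrightarrow>
        cmp C h (cmp C g f) = cmp C (cmp C h g) f) \<and>
    (\<forall>a. idm C a \<in> Hom C a a) \<and>
    (\<forall>a b f. f \<in> Hom C a b \<longrightarrow> cmp C f (idm C a) = f \<and> cmp C (idm C b) f = f) \<and>
    (\<forall>a b f g. f \<in> Hom C a b \<longrightarrow> g \<in> Hom C a b \<longrightarrow> add C f g \<in> Hom C a b) \<and>
    (\<forall>a b. zer C a b \<in> Hom C a b) \<and>
    (\<forall>a b f. f \<in> Hom C a b \<longrightarrow> neg C f \<in> Hom C a b) \<and>
    (\<forall>a b f g h. f \<in> Hom C a b \<longrightarrow> g \<in> Hom C a b \<longrightarrow> h \<in> Hom C a b \<longrightarrow>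
        add C (add C f g) h = add C f (add C g h)) \<and>
    (\<forall>a b f g. f \<in> Hom C a b \<longrightarrow> g \<in> Hom C a b \<longrightarrow> add C f g = add C g f) \<and>
    (\<forall>a b f. f \<in> Hom C a b \<longrightarrow> add C (zer C a b) f = f) \<and>
    (\<forall>a b f. f \<in> Hom C a b \<longrightarrow> add C (neg C f) f = zer C a b) \<and>
    (\<forall>a b c f1 f2 g. f1 \<in> Hom C a b \<longrightarrow> f2 \<in> Hom C a b \<longrightarrow> g \<in> Hom C b c \<longrightarrow>
        cmp C g (add C f1 f2) = add C (cmp C g f1) (cmp C g f2)) \<and>
    (\<forall>a b c f g1 g2. f \<in> Hom C a b \<longrightarrow> g1 \<in> Hom C b c \<longrightarrow> g2 \<in> Hom C b c \<longrightarrow>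
        cmp C (add C g1 g2) f = add C (cmp C g1 f) (cmp C g2 f))"

definition Lam :: "nat \<Rightarrow> nat \<Rightarrow> (int \<Rightarrow> int) set" where
  "Lam m n = {f. mono f \<and> (\<forall>j. f (j + int m + 1) = f j + int n + 1) \<and> f 0 \<ge> 0}"

(* epsilon^n_i : [n-1] -> [n], extended periodically (period n in, n+1 out) *)
definition eps :: "nat \<Rightarrow> nat \<Rightarrow> int \<Rightarrow> int" where
  "eps n i j = (let q = j div int n; r = j mod int n in
      (if r < int i then r else r + 1) + q * (int n + 1))"

(* eta^n_i : [n+1] -> [n], extended periodically (period n+2 in, n+1 out) *)
definition eta :: "nat \<Rightarrow> nat \<Rightarrow> int \<Rightarrow> int" where
  "eta n i j = (let q = j div (int n + 2); r = j mod (int n + 2) in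
      (if r \<le> int i then r else r - 1) + q * (int n + 1))"

(* A duplicial module: contravariant functor Lambda_+^op -> C.
   Mo n = M_n, Mf m n f = M(f) : M_n -> M_m for f in Lambda_+([m],[n]). *)
definition duplicial ::
  "('o,'m) preadd_cat \<Rightarrow> (nat \<Rightarrow> 'o) \<Rightarrow> (nat \<Rightarrow> nat \<Rightarrow> (int \<Rightarrow> int) \<Rightarrow> 'm) \<Rightarrow> bool" where
  "duplicial C Mo Mf \<longleftrightarrow>
    (\<forall>m n f. f \<in> Lam m n \<longrightarrow> Mf m n f \<in> Hom C (Mo n) (Mo m)) \<and>
    (\<forall>n. Mf n n id = idm C (Mo n)) \<and>
    (\<forall>l m n f g. f \<in> Lam l m \<longrightarrow> g \<in> Lam m n \<longrightarrow>
        Mf l n (g \<circ> f) = cmp C (Mf l m f) (Mf m n g))"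

fun altsum :: "('o,'m) preadd_cat \<Rightarrow> (nat \<Rightarrow> 'm) \<Rightarrow> nat \<Rightarrow> 'm" where
  "altsum C F 0 = F 0"
| "altsum C F (Suc k) = add C (altsum C F k)
      (if even (Suc k) then F (Suc k) else neg C (F (Suc k)))"

definition face :: "(nat \<Rightarrow> nat \<Rightarrow> (int \<Rightarrow> int) \<Rightarrow> 'm) \<Rightarrow> nat \<Rightarrow> nat \<Rightarrow> 'm" where
  "face Mf n i = Mf (n - 1) n (eps n i)"

definition degen :: "(nat \<Rightarrow> nat \<Rightarrow> (int \<Rightarrow> int) \<Rightarrow> 'm) \<Rightarrow> nat \<Rightarrow> nat \<Rightarrow> 'm" where
  "degen Mf n i = Mf (n + 1) n (eta n i)"

definition bop :: "('o,'m) preadd_cat \<Rightarrow> (nat \<Rightarrow> nat \<Rightarrow> (int \<Rightarrow> int) \<Rightarrow> 'm) \<Rightarrow> nat \<Rightarrow> 'm" where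
  "bop C Mf n = altsum C (face Mf n) n"

definition dop :: "('o,'m) preadd_cat \<Rightarrow> (nat \<Rightarrow> nat \<Rightarrow> (int \<Rightarrow> int) \<Rightarrow> 'm) \<Rightarrow> nat \<Rightarrow> 'm" where
  "dop C Mf n = altsum C (degen Mf n) (n + 1)"

(* Karoubi operator; for n = 0 the term s_{-1,0} partial_{0,0} is zero *)
definition kappa :: "('o,'m) preadd_cat \<Rightarrow> (nat \<Rightarrow> nat \<Rightarrow> (int \<Rightarrow> int) \<Rightarrow> 'm) \<Rightarrow> nat \<Rightarrow> 'm" where
  "kappa C Mf n =
    (let x = (if n = 0 then cmp C (face Mf 1 0) (degen Mf 0 1)
              else add C (cmp C (face Mf (n + 1) 0) (degen Mf n (n + 1)))
                         (neg C (cmp C (degen Mf (n - 1) n) (face Mf n 0))))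
     in if even n then x else neg C x)"

end

theory Submission
  imports "HOL-Algebra.AbelCoset" Defs
begin

(* Expanding b_(n+1) d_n and d_(n-1) b_n by bilinearity gives signed double sums of the
   composites \<partial>_i s_j and s_j \<partial>_i.  Since \<eta>_i \<epsilon>_i = \<eta>_i \<epsilon>_(i+1) = id in \<Lambda>+, the
   near-diagonal terms \<partial>_i s_i and \<partial>_(i+1) s_i of the first sum are identities, and their
   signed sum is 1.  Every other \<partial>_i s_j except \<partial>_0 s_(n+1) equals s_(j-1) \<partial>_i (if i < j)
   or s_j \<partial>_(i-1) (if i > j + 1); this matches those terms bijectively, with opposite signs,
   with all terms of the second sum except s_n \<partial>_0.  What survives is
   (-1)^(n+1) (\<partial>_0 s_(n+1) - s_n \<partial>_0) = -\<kappa>_n. *)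

section \<open>The category \<Lambda>+\<close>

lemma periodic_shift:
  fixes f :: "int \<Rightarrow> int"
  assumes "\<And>j. f (j + P) = f j + Q"
  shows "f (j + q * P) = f j + q * Q"
proof (induction q rule: int_induct[of _ 0])
  case (step1 i)
  have "f (j + (i + 1) * P) = f ((j + i * P) + P)" by (simp add: algebra_simps)
  also have "\<dots> = f (j + i * P) + Q" by (rule assms)
  finally show ?case using step1 by (simp add: algebra_simps)
next
  case (step2 i)
  have "f (j + i * P) = f ((j + (i - 1) * P) + P)" by (simp add: algebra_simps)
  also have "\<dots> = f (j + (i - 1) * P) + Q" by (rule assms)
  finally show ?case using step2 by (simp add: algebra_simps)
qed simp

lemma periodic_reduce:
  fixes f :: "int \<Rightarrow> int"
  assumes "\<And>j. f (j + P) = f j + Q"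
  shows "f j = f (j mod P) + (j div P) * Q"
  using periodic_shift[where f=f and P=P and Q=Q, OF assms, of "j mod P" "j div P"] by simp

lemma periodic_eqI:
  fixes f g :: "int \<Rightarrow> int"
  assumes "P > 0" "\<And>j. f (j + P) = f j + Q" "\<And>j. g (j + P) = g j + Q"
    and "\<And>k. 0 \<le> k \<Longrightarrow> k < P \<Longrightarrow> f k = g k"
  shows "f = g"
proof
  fix j
  show "f j = g j"
    using periodic_reduce[of f P Q j] periodic_reduce[of g P Q j] assms by simp
qed

lemma periodic_monoI:
  fixes f :: "int \<Rightarrow> int"
  assumes "P > 0" "\<And>j. f (j + P) = f j + Q"
    and "\<And>k. 0 \<le> k \<Longrightarrow> k < P \<Longrightarrow> f k \<le> f (k + 1)"
  shows "mono f"
proof -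
  have step: "f j \<le> f (j + 1)" for j
  proof -
    have "f j = f (j mod P) + (j div P) * Q"
      by (rule periodic_reduce) (rule assms(2))
    moreover have "f (j + 1) = f (j mod P + 1) + (j div P) * Q"
      using periodic_shift[where f=f and P=P and Q=Q, OF assms(2), of "j mod P + 1" "j div P"]
      by (simp add: algebra_simps)
    moreover have "f (j mod P) \<le> f (j mod P + 1)"
      using assms(1,3) by simp
    ultimately show ?thesis by simp
  qed
  show ?thesis
  proof (rule monoI)
    fix x y :: int
    assume "x \<le> y"
    then show "f x \<le> f y"
      by (induction y rule: int_ge_induct) (use step order_trans in blast)+
  qed
qed

lemma Lam_periodic: "f \<in> Lam m n \<Longrightarrow> f (j + (int m + 1)) = f j + (int n + 1)"
  unfolding Lam_def by (simp add: add.assoc)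

lemma Lam_eqI:
  assumes "f \<in> Lam m n" "g \<in> Lam m n" "\<And>k. 0 \<le> k \<Longrightarrow> k \<le> int m \<Longrightarrow> f k = g k"
  shows "f = g"
  by (rule periodic_eqI[where P="int m + 1" and Q="int n + 1"])
    (use assms Lam_periodic in auto)

lemma id_in_Lam: "id \<in> Lam n n"
  unfolding Lam_def by (simp add: mono_def)

lemma comp_in_Lam:
  assumes "f \<in> Lam l m" "g \<in> Lam m n"
  shows "g \<circ> f \<in> Lam l n"
proof -
  have "mono f" "mono g" "0 \<le> f 0" "0 \<le> g 0"
    using assms unfolding Lam_def by auto
  then have "mono (g \<circ> f)" "0 \<le> g (f 0)"
    by (auto simp: mono_def intro: order_trans)
  then show ?thesis
    using assms Lam_periodic[of f l m] Lam_periodic[of g m n]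
    unfolding Lam_def by (simp add: add.assoc)
qed

lemma eps_periodic: "0 < n \<Longrightarrow> eps n i (j + int n) = eps n i j + int n + 1"
  unfolding eps_def Let_def by (simp add: div_add_self2 algebra_simps)

lemma eta_periodic: "eta n i (j + (int n + 2)) = eta n i j + int n + 1"
proof -
  have "int n + 2 \<noteq> 0" by simp
  then show ?thesis unfolding eta_def Let_def by (simp add: div_add_self2 algebra_simps)
qed

lemma eps_on_period:
  assumes "0 < n" "0 \<le> k" "k \<le> int n"
  shows "eps n i k = (if k < int n then (if k < int i then k else k + 1)
                      else if 0 < i then int n + 1 else int n + 2)"
proof (cases "k < int n")
  case False
  then have "eps n i k = eps n i 0 + int n + 1"
    using eps_periodic[OF assms(1), of i 0] assms(3) by simp
  then show ?thesis using False unfolding eps_def by simp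
qed (use assms in \<open>simp add: eps_def\<close>)

lemma eta_on_period:
  "0 \<le> k \<Longrightarrow> k \<le> int n + 1 \<Longrightarrow> eta n i k = (if k \<le> int i then k else k - 1)"
  unfolding eta_def Let_def by simp

lemma eps_in_Lam:
  assumes "0 < n" "i \<le> n"
  shows "eps n i \<in> Lam (n - 1) n"
proof -
  have "mono (eps n i)"
    by (rule periodic_monoI[where P="int n" and Q="int n + 1"])
      (use assms eps_periodic eps_on_period in \<open>auto simp: add.assoc\<close>)
  moreover have "eps n i (j + int (n - 1) + 1) = eps n i j + int n + 1" for j
    using eps_periodic[OF assms(1)] assms(1) by (simp add: of_nat_diff add.assoc)
  ultimately show ?thesis
    using eps_on_period[OF assms(1), of 0 i] unfolding Lam_def by auto
qed

lemma eta_in_Lam: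
  assumes "i \<le> n + 1"
  shows "eta n i \<in> Lam (n + 1) n"
proof -
  have top: "eta n i (int n + 2) = int n + 1"
    using eta_periodic[of n i 0] eta_on_period[of 0 n i] by simp
  have "mono (eta n i)"
  proof (rule periodic_monoI[where P="int n + 2" and Q="int n + 1"])
    fix k :: int
    assume "0 \<le> k" "k < int n + 2"
    show "eta n i k \<le> eta n i (k + 1)"
    proof (cases "k + 1 = int n + 2")
      case True
      then have "eta n i (k + 1) = int n + 1" by (simp only: top)
      moreover have "eta n i k \<le> int n + 1"
        using True eta_on_period[of k n i] by auto
      ultimately show ?thesis by linarith
    qed (use \<open>0 \<le> k\<close> \<open>k < int n + 2\<close> eta_on_period[of k n i] eta_on_period[of "k + 1" n i] in auto)
  qed (simp_all add: eta_periodic add.assoc)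
  then show ?thesis
    using eta_periodic[of n i] eta_on_period[of 0 n i] unfolding Lam_def by (simp add: algebra_simps)
qed

lemma eta_comp_eps_in_Lam: "i \<le> Suc n \<Longrightarrow> j \<le> Suc n \<Longrightarrow> eta n j \<circ> eps (Suc n) i \<in> Lam n n"
  using comp_in_Lam[OF eps_in_Lam[of "n + 1" i] eta_in_Lam[of j n]] by simp

lemma eps_comp_eta_in_Lam: "0 < n \<Longrightarrow> i \<le> n \<Longrightarrow> j \<le> n \<Longrightarrow> eps n i \<circ> eta (n - 1) j \<in> Lam n n"
  using comp_in_Lam[OF eta_in_Lam[of j "n - 1"] eps_in_Lam[of n i]] by simp

lemma eta_comp_eps_same: "i \<le> Suc n \<Longrightarrow> eta n i \<circ> eps (Suc n) i = id"
  by (rule Lam_eqI[OF eta_comp_eps_in_Lam id_in_Lam]) (auto simp: eps_on_period eta_on_period)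

lemma eta_comp_eps_Suc: "j \<le> n \<Longrightarrow> eta n j \<circ> eps (Suc n) (Suc j) = id"
  by (rule Lam_eqI[OF eta_comp_eps_in_Lam id_in_Lam]) (auto simp: eps_on_period eta_on_period)

lemma eta_comp_eps_less:
  assumes "i < j" "j \<le> Suc n" "\<not> (i = 0 \<and> j = Suc n)"
  shows "eta n j \<circ> eps (Suc n) i = eps n i \<circ> eta (n - 1) (j - 1)"
proof -
  have "0 < n" using assms by auto
  show ?thesis
    by (rule Lam_eqI[OF eta_comp_eps_in_Lam eps_comp_eta_in_Lam])
      (use assms \<open>0 < n\<close> in \<open>auto simp: eps_on_period eta_on_period\<close>)
qed

lemma eta_comp_eps_greater:
  assumes "Suc j < i" "i \<le> Suc n"
  shows "eta n j \<circ> eps (Suc n) i = eps n (i - 1) \<circ> eta (n - 1) j"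
proof -
  have "0 < n" using assms by auto
  show ?thesis
    by (rule Lam_eqI[OF eta_comp_eps_in_Lam eps_comp_eta_in_Lam])
      (use assms \<open>0 < n\<close> in \<open>auto simp: eps_on_period eta_on_period\<close>)
qed

section \<open>Signed sums in abelian groups\<close>

definition alt_sign :: "('a, 'b) ring_scheme \<Rightarrow> nat \<Rightarrow> 'a \<Rightarrow> 'a" where
  "alt_sign G k x = (if even k then x else \<ominus>\<^bsub>G\<^esub> x)"

context abelian_group
begin

lemma alt_sign_closed [simp]: "x \<in> carrier G \<Longrightarrow> alt_sign G k x \<in> carrier G"
  by (simp add: alt_sign_def)

lemma alt_sign_Suc: "x \<in> carrier G \<Longrightarrow> alt_sign G (Suc k) x = \<ominus> alt_sign G k x"
  by (simp add: alt_sign_def minus_minus)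

lemma alt_sign_add: "x \<in> carrier G \<Longrightarrow> alt_sign G (i + j) x = alt_sign G i (alt_sign G j x)"
  by (simp add: alt_sign_def minus_minus)

lemma finsum_neg:
  assumes "f \<in> A \<rightarrow> carrier G"
  shows "\<ominus> finsum G f A = finsum G (\<lambda>a. \<ominus> f a) A"
proof (rule minus_equality)
  have "finsum G (\<lambda>a. \<ominus> f a) A \<oplus> finsum G f A = finsum G (\<lambda>a. \<ominus> f a \<oplus> f a) A"
    using assms by (intro finsum_addf[symmetric]) auto
  also have "\<dots> = finsum G (\<lambda>a. \<zero>) A"
    using assms by (intro finsum_cong') (auto simp: l_neg Pi_def)
  also have "\<dots> = \<zero>" by simp
  finally show "finsum G (\<lambda>a. \<ominus> f a) A \<oplus> finsum G f A = \<zero>" .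
qed (use assms in \<open>auto intro: finsum_closed\<close>)

lemma finsum_alt_sign:
  "f \<in> A \<rightarrow> carrier G \<Longrightarrow> alt_sign G k (finsum G f A) = finsum G (\<lambda>a. alt_sign G k (f a)) A"
  by (simp add: alt_sign_def finsum_neg)

lemma finsum_reindex_neg:
  assumes "inj_on h A" "T \<in> h ` A \<rightarrow> carrier G" "U \<in> A \<rightarrow> carrier G"
    and "\<And>a. a \<in> A \<Longrightarrow> T (h a) = \<ominus> U a"
  shows "finsum G T (h ` A) = \<ominus> finsum G U A"
proof -
  have "finsum G T (h ` A) = finsum G (\<lambda>a. T (h a)) A"
    by (rule finsum_reindex[OF assms(2,1)])
  also have "\<dots> = finsum G (\<lambda>a. \<ominus> U a) A"
    using assms(3,4) by (intro finsum_cong') auto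
  finally show ?thesis
    using assms(3) by (simp add: finsum_neg)
qed

lemma finsum_cartesian_product:
  assumes "finite A" "finite B" "f \<in> A \<times> B \<rightarrow> carrier G"
  shows "finsum G (\<lambda>i. finsum G (\<lambda>j. f (i, j)) B) A = finsum G f (A \<times> B)"
  using assms
proof (induction A rule: finite_induct)
  case (insert a A)
  have row: "finsum G f (Pair a ` B) = finsum G (\<lambda>j. f (a, j)) B"
    using insert.prems by (subst finsum_reindex) (auto simp: inj_on_def)
  have "insert a A \<times> B = Pair a ` B \<union> A \<times> B" by auto
  moreover have "Pair a ` B \<inter> A \<times> B = {}" using insert.hyps by auto
  ultimately have "finsum G f (insert a A \<times> B) = finsum G (\<lambda>j. f (a, j)) B \<oplus> finsum G f (A \<times> B)"
    using insert.hyps insert.prems by (simp add: finsum_Un_disjoint row[symmetric] Pi_def)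
  then show ?case
    using insert by (simp add: Pi_def finsum_closed)
qed simp

end

(* The term s_j \<partial>_i of d_(n-1) b_n corresponds to the term \<partial>_i s_(j+1) (if i \<le> j) or
   \<partial>_(i+1) s_j (if j < i) of b_(n+1) d_n. *)
definition exchange_index :: "nat \<times> nat \<Rightarrow> nat \<times> nat" where
  "exchange_index = (\<lambda>(j, i). if i \<le> j then (i, Suc j) else (Suc i, j))"

lemma inj_exchange_index: "inj exchange_index"
  unfolding exchange_index_def inj_def by (auto split: if_splits)

lemma exchange_index_image:
  "exchange_index ` ({..n} \<times> {..n} - {(n, 0)}) =
     {(i, j). i < j \<and> j \<le> Suc n \<and> (i, j) \<noteq> (0, Suc n)} \<union> {(i, j). Suc j < i \<and> i \<le> Suc n}"
  (is "?L = ?R")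
proof
  show "?L \<subseteq> ?R" by (auto simp: exchange_index_def split: if_splits)
  show "?R \<subseteq> ?L"
  proof clarify
    fix i j
    assume ij: "(i, j) \<in> ?R"
    show "(i, j) \<in> ?L"
    proof (cases "i < j")
      case True
      then show ?thesis
        using ij by (intro image_eqI[where x="(j - 1, i)"]) (auto simp: exchange_index_def)
    next
      case False
      then show ?thesis
        using ij by (intro image_eqI[where x="(j, i - 1)"]) (auto simp: exchange_index_def)
    qed
  qed
qed

context abelian_group
begin

lemma finsum_near_diagonal:
  assumes "T \<in> {(i, j). j \<le> i \<and> i \<le> Suc j \<and> i \<le> k} \<rightarrow> carrier G" "x \<in> carrier G"
    and "\<And>j. j \<le> k \<Longrightarrow> T (j, j) = x" "\<And>j. j < k \<Longrightarrow> T (Suc j, j) = \<ominus> x"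
  shows "finsum G T {(i, j). j \<le> i \<and> i \<le> Suc j \<and> i \<le> k} = x"
  using assms
proof (induction k)
  case 0
  have "{(i, j). j \<le> i \<and> i \<le> Suc j \<and> i \<le> 0} = {(0, 0)}" by auto
  then show ?case using 0 by simp
next
  case (Suc k)
  let ?N = "\<lambda>k. {(i, j). j \<le> i \<and> i \<le> Suc j \<and> i \<le> k}"
  have N: "?N (Suc k) = insert (Suc k, Suc k) (insert (Suc k, k) (?N k))" by auto
  have "finite (?N k)" by (rule finite_subset[of _ "{..k} \<times> {..k}"]) auto
  then have "finsum G T (?N (Suc k)) = T (Suc k, Suc k) \<oplus> (T (Suc k, k) \<oplus> finsum G T (?N k))"
    unfolding N using Suc.prems(1) by (simp add: Pi_def finsum_closed)
  also have "\<dots> = x \<oplus> (\<ominus> x \<oplus> x)"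
    using Suc by (simp add: Pi_def)
  finally show ?case using Suc.prems(2) by (simp add: l_neg)
qed

lemma finsum_grid_cancellation:
  assumes T: "T \<in> {..Suc n} \<times> {..Suc n} \<rightarrow> carrier G" and U: "U \<in> {..n} \<times> {..n} \<rightarrow> carrier G"
    and x: "x \<in> carrier G"
    and diag: "\<And>j. j \<le> Suc n \<Longrightarrow> T (j, j) = x"
    and subdiag: "\<And>j. j \<le> n \<Longrightarrow> T (Suc j, j) = \<ominus> x"
    and exchange: "\<And>p. p \<in> {..n} \<times> {..n} - {(n, 0)} \<Longrightarrow> T (exchange_index p) = \<ominus> U p"
  shows "finsum G T ({..Suc n} \<times> {..Suc n}) \<oplus> finsum G U ({..n} \<times> {..n})
           = x \<oplus> (T (0, Suc n) \<oplus> U (n, 0))"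
proof -
  define Q where "Q = {..n} \<times> {..n} - {(n, 0)}"
  define N where "N = {(i, j). j \<le> i \<and> i \<le> Suc j \<and> i \<le> Suc n}"
  define R where "R = exchange_index ` Q"
  have grid: "{..Suc n} \<times> {..Suc n} = insert (0, Suc n) (N \<union> R)"
    and corner: "(0, Suc n) \<notin> N \<union> R" and disjoint: "N \<inter> R = {}"
    unfolding N_def R_def Q_def exchange_index_image by auto
  have "finite N" by (rule finite_subset[of _ "{..Suc n} \<times> {..Suc n}"]) (auto simp: N_def)
  have "finite Q" by (simp add: Q_def)
  then have "finite R" by (simp add: R_def)
  have TN: "T \<in> N \<rightarrow> carrier G" and TR: "T \<in> R \<rightarrow> carrier G" and UQ: "U \<in> Q \<rightarrow> carrier G"
    using T U grid by (auto simp: Q_def)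
  have sum_N: "finsum G T N = x"
    unfolding N_def by (rule finsum_near_diagonal) (use TN x diag subdiag in \<open>auto simp: N_def\<close>)
  have sum_R: "finsum G T R = \<ominus> finsum G U Q"
    unfolding R_def using TR UQ exchange
    by (intro finsum_reindex_neg inj_on_subset[OF inj_exchange_index]) (auto simp: R_def Q_def)
  have sum_T: "finsum G T ({..Suc n} \<times> {..Suc n}) = T (0, Suc n) \<oplus> (x \<oplus> \<ominus> finsum G U Q)"
    unfolding grid using T grid corner disjoint \<open>finite N\<close> \<open>finite R\<close> TN TR
    by (simp add: finsum_Un_disjoint sum_N sum_R)
  have sum_U: "finsum G U ({..n} \<times> {..n}) = U (n, 0) \<oplus> finsum G U Q"
  proof -
    have "{..n} \<times> {..n} = insert (n, 0) Q" by (auto simp: Q_def)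
    moreover have "finsum G U (insert (n, 0) Q) = U (n, 0) \<oplus> finsum G U Q"
      using U UQ \<open>finite Q\<close> by (intro finsum_insert) (auto simp: Q_def)
    ultimately show ?thesis by simp
  qed
  have closed: "finsum G U Q \<in> carrier G" "T (0, Suc n) \<in> carrier G" "U (n, 0) \<in> carrier G"
    using T U UQ by (auto intro: finsum_closed)
  have "T (0, Suc n) \<oplus> (x \<oplus> \<ominus> finsum G U Q) \<oplus> (U (n, 0) \<oplus> finsum G U Q)
      = x \<oplus> (T (0, Suc n) \<oplus> U (n, 0)) \<oplus> (\<ominus> finsum G U Q \<oplus> finsum G U Q)"
    using closed x by (simp add: a_ac)
  then show ?thesis
    using closed x by (simp add: sum_T sum_U l_neg)
qed

end

section \<open>Preadditive categories\<close>

lemma abelian_group_homI_additive: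
  assumes "abelian_group G" "abelian_group H"
    and "\<And>x. x \<in> carrier G \<Longrightarrow> h x \<in> carrier H"
    and "\<And>x y. x \<in> carrier G \<Longrightarrow> y \<in> carrier G \<Longrightarrow> h (x \<oplus>\<^bsub>G\<^esub> y) = h x \<oplus>\<^bsub>H\<^esub> h y"
  shows "abelian_group_hom G H h"
  using assms
  by (intro abelian_group_homI group_hom.intro group_hom_axioms.intro homI abelian_group.a_group) auto

definition hom_group :: "('o, 'm) preadd_cat \<Rightarrow> 'o \<Rightarrow> 'o \<Rightarrow> 'm ring" where
  "hom_group C a b =
     \<lparr>carrier = Hom C a b, monoid.mult = undefined, one = undefined, zero = zer C a b, ring.add = add C\<rparr>"

lemma hom_group_simps [simp]:
  "carrier (hom_group C a b) = Hom C a b"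
  "ring.add (hom_group C a b) = add C"
  "zero (hom_group C a b) = zer C a b"
  by (simp_all add: hom_group_def)

lemma altsum_cong: "(\<And>i. i \<le> k \<Longrightarrow> F i = G i) \<Longrightarrow> altsum C F k = altsum C G k"
  by (induction k) auto

locale preadditive_category =
  fixes C :: "('o, 'm) preadd_cat"
  assumes preadditive: "preadditive C"
begin

lemma cmp_closed: "f \<in> Hom C a b \<Longrightarrow> g \<in> Hom C b c \<Longrightarrow> cmp C g f \<in> Hom C a c"
  using preadditive by (simp add: preadditive_def)

lemma idm_closed [simp]: "idm C a \<in> Hom C a a"
  using preadditive by (simp add: preadditive_def)

lemma add_closed [simp]: "f \<in> Hom C a b \<Longrightarrow> g \<in> Hom C a b \<Longrightarrow> add C f g \<in> Hom C a b"
  using preadditive by (simp add: preadditive_def)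

lemma zer_closed [simp]: "zer C a b \<in> Hom C a b"
  using preadditive by (simp add: preadditive_def)

lemma neg_closed [simp]: "f \<in> Hom C a b \<Longrightarrow> neg C f \<in> Hom C a b"
  using preadditive by (simp add: preadditive_def)

lemma cmp_add_right:
  "f1 \<in> Hom C a b \<Longrightarrow> f2 \<in> Hom C a b \<Longrightarrow> g \<in> Hom C b c \<Longrightarrow>
     cmp C g (add C f1 f2) = add C (cmp C g f1) (cmp C g f2)"
  using preadditive by (simp add: preadditive_def)

lemma cmp_add_left:
  "f \<in> Hom C a b \<Longrightarrow> g1 \<in> Hom C b c \<Longrightarrow> g2 \<in> Hom C b c \<Longrightarrow>
     cmp C (add C g1 g2) f = add C (cmp C g1 f) (cmp C g2 f)"
  using preadditive by (simp add: preadditive_def)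

lemma abelian_group_hom_group: "abelian_group (hom_group C a b)"
proof (rule abelian_groupI)
  fix x
  assume "x \<in> carrier (hom_group C a b)"
  then show "\<exists>y\<in>carrier (hom_group C a b). y \<oplus>\<^bsub>hom_group C a b\<^esub> x = \<zero>\<^bsub>hom_group C a b\<^esub>"
    using preadditive unfolding preadditive_def by (intro bexI[of _ "neg C x"]) auto
qed (use preadditive in \<open>auto simp: preadditive_def\<close>)

sublocale hom: abelian_group "hom_group C a b" for a b
  by (rule abelian_group_hom_group)

lemma hom_alt_sign_closed [simp]: "f \<in> Hom C a b \<Longrightarrow> alt_sign (hom_group C a b) k f \<in> Hom C a b"
  using hom.alt_sign_closed by simp

lemma hom_finsum_closed [simp]: "f \<in> A \<rightarrow> Hom C a b \<Longrightarrow> finsum (hom_group C a b) f A \<in> Hom C a b"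
  using hom.finsum_closed by simp

lemma hom_group_a_inv: "f \<in> Hom C a b \<Longrightarrow> \<ominus>\<^bsub>hom_group C a b\<^esub> f = neg C f"
  by (rule hom.minus_equality) (use preadditive in \<open>auto simp: preadditive_def\<close>)

lemma neg_neg: "f \<in> Hom C a b \<Longrightarrow> neg C (neg C f) = f"
  using hom.minus_minus[of f a b] by (simp add: hom_group_a_inv neg_closed)

lemma neg_add: "f \<in> Hom C a b \<Longrightarrow> g \<in> Hom C a b \<Longrightarrow> neg C (add C f g) = add C (neg C f) (neg C g)"
  using hom.minus_add[of f a b g] by (simp add: hom_group_a_inv)

lemma add_neg_cancel: "f \<in> Hom C a b \<Longrightarrow> g \<in> Hom C a b \<Longrightarrow> add C f (add C (neg C f) g) = g"
  using hom.r_neg2[of f a b g] by (simp add: hom_group_a_inv)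

lemma cmp_left_hom: "g \<in> Hom C b c \<Longrightarrow> abelian_group_hom (hom_group C a b) (hom_group C a c) (cmp C g)"
  by (intro abelian_group_homI_additive abelian_group_hom_group) (auto simp: cmp_closed cmp_add_right)

lemma cmp_right_hom:
  "f \<in> Hom C a b \<Longrightarrow> abelian_group_hom (hom_group C b c) (hom_group C a c) (\<lambda>g. cmp C g f)"
  by (intro abelian_group_homI_additive abelian_group_hom_group) (auto simp: cmp_closed cmp_add_left)

lemma altsum_closed: "(\<And>i. i \<le> k \<Longrightarrow> F i \<in> Hom C a b) \<Longrightarrow> altsum C F k \<in> Hom C a b"
  by (induction k) (auto intro: add_closed neg_closed)

lemma altsum_hom:
  assumes "abelian_group_hom (hom_group C a b) (hom_group C a' b') h"
    and "\<And>i. i \<le> k \<Longrightarrow> F i \<in> Hom C a b"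
  shows "h (altsum C F k) = altsum C (\<lambda>i. h (F i)) k"
  using assms(2)
proof (induction k)
  case (Suc k)
  interpret abelian_group_hom "hom_group C a b" "hom_group C a' b'" h by (rule assms(1))
  have "F (Suc k) \<in> Hom C a b" "altsum C F k \<in> Hom C a b"
    using Suc.prems by (auto intro: altsum_closed)
  then show ?case
    using Suc hom_add[of "altsum C F k"] hom_a_inv[of "F (Suc k)"] hom_closed[of "F (Suc k)"]
    by (auto simp: hom_group_a_inv neg_closed)
qed simp

lemma altsum_eq_finsum:
  assumes "\<And>i. i \<le> k \<Longrightarrow> F i \<in> Hom C a b"
  shows "altsum C F k = finsum (hom_group C a b) (\<lambda>i. alt_sign (hom_group C a b) i (F i)) {..k}"
  using assms
proof (induction k)
  case 0
  then show ?case by (simp add: alt_sign_def hom.r_zero[simplified])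
next
  case (Suc k)
  let ?G = "hom_group C a b"
  have "finsum ?G (\<lambda>i. alt_sign ?G i (F i)) {..Suc k}
      = alt_sign ?G (Suc k) (F (Suc k)) \<oplus>\<^bsub>?G\<^esub> finsum ?G (\<lambda>i. alt_sign ?G i (F i)) {..k}"
    using Suc.prems by (intro hom.finsum_Suc) auto
  also have "\<dots> = add C (altsum C F k) (alt_sign ?G (Suc k) (F (Suc k)))"
    using Suc hom.a_comm[of "alt_sign ?G (Suc k) (F (Suc k))" a b] by (simp add: Pi_def)
  finally show ?case
    using Suc.prems by (simp add: alt_sign_def hom_group_a_inv)
qed

lemma altsum_altsum_eq_finsum:
  assumes "\<And>i j. i \<le> k \<Longrightarrow> j \<le> l \<Longrightarrow> P i j \<in> Hom C a b"
  shows "altsum C (\<lambda>i. altsum C (P i) l) k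
           = finsum (hom_group C a b) (\<lambda>(i, j). alt_sign (hom_group C a b) (i + j) (P i j)) ({..k} \<times> {..l})"
proof -
  let ?G = "hom_group C a b"
  have "altsum C (\<lambda>i. altsum C (P i) l) k = finsum ?G (\<lambda>i. alt_sign ?G i (altsum C (P i) l)) {..k}"
    using assms by (intro altsum_eq_finsum altsum_closed) auto
  also have "\<dots> = finsum ?G (\<lambda>i. finsum ?G (\<lambda>j. alt_sign ?G (i + j) (P i j)) {..l}) {..k}"
  proof (rule hom.finsum_cong')
    fix i
    assume "i \<in> {..k}"
    then have "altsum C (P i) l = finsum ?G (\<lambda>j. alt_sign ?G j (P i j)) {..l}"
      using assms by (intro altsum_eq_finsum) auto
    then have "alt_sign ?G i (altsum C (P i) l) = finsum ?G (\<lambda>j. alt_sign ?G i (alt_sign ?G j (P i j))) {..l}"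
      using assms \<open>i \<in> {..k}\<close> by (simp add: hom.finsum_alt_sign Pi_def)
    also have "\<dots> = finsum ?G (\<lambda>j. alt_sign ?G (i + j) (P i j)) {..l}"
      using assms \<open>i \<in> {..k}\<close> by (intro hom.finsum_cong') (auto simp: hom.alt_sign_add[simplified])
    finally show "alt_sign ?G i (altsum C (P i) l) = finsum ?G (\<lambda>j. alt_sign ?G (i + j) (P i j)) {..l}" .
  qed (use assms in \<open>auto intro: hom.finsum_closed\<close>)
  also have "\<dots> = finsum ?G (\<lambda>(i, j). alt_sign ?G (i + j) (P i j)) ({..k} \<times> {..l})"
  proof -
    have "(\<lambda>(i, j). alt_sign ?G (i + j) (P i j)) \<in> {..k} \<times> {..l} \<rightarrow> carrier ?G"
      using assms by auto
    from hom.finsum_cartesian_product[OF _ _ this] show ?thesis by simp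
  qed
  finally show ?thesis .
qed

lemma cmp_altsum_altsum:
  assumes "\<And>i. i \<le> k \<Longrightarrow> F i \<in> Hom C b c" "\<And>j. j \<le> l \<Longrightarrow> H j \<in> Hom C a b"
  shows "cmp C (altsum C F k) (altsum C H l)
           = finsum (hom_group C a c) (\<lambda>(i, j). alt_sign (hom_group C a c) (i + j) (cmp C (F i) (H j)))
               ({..k} \<times> {..l})"
proof -
  have "cmp C (altsum C F k) (altsum C H l) = altsum C (\<lambda>i. cmp C (F i) (altsum C H l)) k"
    using assms by (intro altsum_hom[OF cmp_right_hom] altsum_closed)
  also have "\<dots> = altsum C (\<lambda>i. altsum C (\<lambda>j. cmp C (F i) (H j)) l) k"
    using assms by (intro altsum_cong altsum_hom[OF cmp_left_hom])
  also have "\<dots> = finsum (hom_group C a c) (\<lambda>(i, j). alt_sign (hom_group C a c) (i + j) (cmp C (F i) (H j)))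
                     ({..k} \<times> {..l})"
    using assms by (intro altsum_altsum_eq_finsum cmp_closed)
  finally show ?thesis .
qed

end

section \<open>Duplicial modules\<close>

locale duplicial_module = preadditive_category C
  for C :: "('o, 'm) preadd_cat" +
  fixes Mo :: "nat \<Rightarrow> 'o" and Mf :: "nat \<Rightarrow> nat \<Rightarrow> (int \<Rightarrow> int) \<Rightarrow> 'm"
  assumes duplicial: "duplicial C Mo Mf"
begin

lemma Mf_hom: "f \<in> Lam m k \<Longrightarrow> Mf m k f \<in> Hom C (Mo k) (Mo m)"
  using duplicial unfolding duplicial_def by blast

lemma Mf_id: "Mf k k id = idm C (Mo k)"
  using duplicial unfolding duplicial_def by blast

lemma Mf_comp: "f \<in> Lam l m \<Longrightarrow> g \<in> Lam m k \<Longrightarrow> Mf l k (g \<circ> f) = cmp C (Mf l m f) (Mf m k g)"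
  using duplicial unfolding duplicial_def by blast

lemma face_hom: "0 < n \<Longrightarrow> i \<le> n \<Longrightarrow> face Mf n i \<in> Hom C (Mo n) (Mo (n - 1))"
  unfolding face_def by (intro Mf_hom eps_in_Lam)

lemma degen_hom: "j \<le> n + 1 \<Longrightarrow> degen Mf n j \<in> Hom C (Mo n) (Mo (n + 1))"
  unfolding degen_def by (intro Mf_hom eta_in_Lam)

lemma face_degen_eq_Mf:
  "i \<le> Suc n \<Longrightarrow> j \<le> Suc n \<Longrightarrow>
     cmp C (face Mf (Suc n) i) (degen Mf n j) = Mf n n (eta n j \<circ> eps (Suc n) i)"
  using Mf_comp[OF eps_in_Lam[of "n + 1" i] eta_in_Lam[of j n]] by (simp add: face_def degen_def)

lemma degen_face_eq_Mf:
  "0 < n \<Longrightarrow> i \<le> n \<Longrightarrow> j \<le> n \<Longrightarrow>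
     cmp C (degen Mf (n - 1) j) (face Mf n i) = Mf n n (eps n i \<circ> eta (n - 1) j)"
  using Mf_comp[OF eta_in_Lam[of j "n - 1"] eps_in_Lam[of n i]] by (simp add: face_def degen_def)

lemma face_degen_same: "i \<le> Suc n \<Longrightarrow> cmp C (face Mf (Suc n) i) (degen Mf n i) = idm C (Mo n)"
  using face_degen_eq_Mf[of i n i] eta_comp_eps_same[of i n] by (simp add: Mf_id)

lemma face_Suc_degen: "j \<le> n \<Longrightarrow> cmp C (face Mf (Suc n) (Suc j)) (degen Mf n j) = idm C (Mo n)"
  using face_degen_eq_Mf[of "Suc j" n j] eta_comp_eps_Suc[of j n] by (simp add: Mf_id)

lemma face_degen_less:
  assumes "i < j" "j \<le> Suc n" "\<not> (i = 0 \<and> j = Suc n)"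
  shows "cmp C (face Mf (Suc n) i) (degen Mf n j) = cmp C (degen Mf (n - 1) (j - 1)) (face Mf n i)"
proof -
  have "cmp C (face Mf (Suc n) i) (degen Mf n j) = Mf n n (eta n j \<circ> eps (Suc n) i)"
    using assms by (intro face_degen_eq_Mf) auto
  also have "\<dots> = Mf n n (eps n i \<circ> eta (n - 1) (j - 1))"
    by (simp only: eta_comp_eps_less[OF assms])
  also have "\<dots> = cmp C (degen Mf (n - 1) (j - 1)) (face Mf n i)"
    using assms by (intro degen_face_eq_Mf[symmetric]) auto
  finally show ?thesis .
qed

lemma face_degen_greater:
  assumes "Suc j < i" "i \<le> Suc n"
  shows "cmp C (face Mf (Suc n) i) (degen Mf n j) = cmp C (degen Mf (n - 1) j) (face Mf n (i - 1))"
proof -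
  have "cmp C (face Mf (Suc n) i) (degen Mf n j) = Mf n n (eta n j \<circ> eps (Suc n) i)"
    using assms by (intro face_degen_eq_Mf) auto
  also have "\<dots> = Mf n n (eps n (i - 1) \<circ> eta (n - 1) j)"
    by (simp only: eta_comp_eps_greater[OF assms])
  also have "\<dots> = cmp C (degen Mf (n - 1) j) (face Mf n (i - 1))"
    using assms by (intro degen_face_eq_Mf[symmetric]) auto
  finally show ?thesis .
qed

abbreviation end_group :: "nat \<Rightarrow> 'm ring" where
  "end_group n \<equiv> hom_group C (Mo n) (Mo n)"

definition face_degen_term :: "nat \<Rightarrow> nat \<times> nat \<Rightarrow> 'm" where
  "face_degen_term n = (\<lambda>(i, j). alt_sign (end_group n) (i + j) (cmp C (face Mf (Suc n) i) (degen Mf n j)))"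

(* Indexed (j, i) like the composite s_j \<partial>_i; zero for n = 0 by the convention M_(-1) = 0. *)
definition degen_face_term :: "nat \<Rightarrow> nat \<times> nat \<Rightarrow> 'm" where
  "degen_face_term n = (\<lambda>(j, i). if n = 0 then zer C (Mo n) (Mo n)
     else alt_sign (end_group n) (j + i) (cmp C (degen Mf (n - 1) j) (face Mf n i)))"

lemma face_degen_term_closed: "face_degen_term n \<in> {..Suc n} \<times> {..Suc n} \<rightarrow> Hom C (Mo n) (Mo n)"
  using face_hom[of "Suc n"] degen_hom[of _ n]
  by (auto simp: face_degen_term_def intro!: hom_alt_sign_closed cmp_closed)

lemma degen_face_term_closed: "degen_face_term n \<in> {..n} \<times> {..n} \<rightarrow> Hom C (Mo n) (Mo n)"
  using face_hom[of n] degen_hom[of _ "n - 1"]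
  by (auto simp: degen_face_term_def zer_closed intro!: hom_alt_sign_closed cmp_closed)

lemma bop_cmp_dop:
  "cmp C (bop C Mf (n + 1)) (dop C Mf n) = finsum (end_group n) (face_degen_term n) ({..Suc n} \<times> {..Suc n})"
  unfolding bop_def dop_def face_degen_term_def Suc_eq_plus1
  by (rule cmp_altsum_altsum) (use face_hom[of "Suc n"] degen_hom[of _ n] in simp_all)

lemma dop_cmp_bop:
  "(if n = 0 then zer C (Mo 0) (Mo 0) else cmp C (dop C Mf (n - 1)) (bop C Mf n))
     = finsum (end_group n) (degen_face_term n) ({..n} \<times> {..n})"
proof (cases "n = 0")
  case True
  then show ?thesis by (simp add: degen_face_term_def zer_closed hom.r_zero[simplified])
next
  case False
  then have "n - 1 + 1 = n" by simp
  then have "cmp C (dop C Mf (n - 1)) (bop C Mf n) = cmp C (altsum C (degen Mf (n - 1)) n) (altsum C (face Mf n) n)"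
    unfolding bop_def dop_def by simp
  also have "\<dots> = finsum (end_group n)
     (\<lambda>(j, i). alt_sign (end_group n) (j + i) (cmp C (degen Mf (n - 1) j) (face Mf n i))) ({..n} \<times> {..n})"
    by (rule cmp_altsum_altsum) (use face_hom[of n] degen_hom[of _ "n - 1"] False in simp_all)
  finally show ?thesis
    using False by (simp add: degen_face_term_def)
qed

lemma face_degen_term_diagonal: "j \<le> Suc n \<Longrightarrow> face_degen_term n (j, j) = idm C (Mo n)"
  by (simp add: face_degen_term_def face_degen_same alt_sign_def)

lemma face_degen_term_subdiagonal:
  "j \<le> n \<Longrightarrow> face_degen_term n (Suc j, j) = \<ominus>\<^bsub>end_group n\<^esub> idm C (Mo n)"
  by (simp add: face_degen_term_def face_Suc_degen alt_sign_def)

lemma face_degen_term_exchange_index: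
  assumes "p \<in> {..n} \<times> {..n} - {(n, 0)}"
  shows "face_degen_term n (exchange_index p) = \<ominus>\<^bsub>end_group n\<^esub> degen_face_term n p"
proof -
  obtain j i where "p = (j, i)" by (cases p)
  with assms have p: "p = (j, i)" "j \<le> n" "i \<le> n" "(j, i) \<noteq> (n, 0)" by auto
  then have "0 < n" by (cases n) auto
  have "face_degen_term n (exchange_index p)
      = alt_sign (end_group n) (Suc (j + i)) (cmp C (degen Mf (n - 1) j) (face Mf n i))"
  proof (cases "i \<le> j")
    case True
    then show ?thesis
      using p face_degen_less[of i "Suc j" n] by (simp add: exchange_index_def face_degen_term_def ac_simps)
  next
    case False
    then show ?thesis
      using p face_degen_greater[of j "Suc i" n] by (simp add: exchange_index_def face_degen_term_def ac_simps)
  qed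
  moreover have "cmp C (degen Mf (n - 1) j) (face Mf n i) \<in> Hom C (Mo n) (Mo n)"
    using p \<open>0 < n\<close> face_hom[of n i] degen_hom[of j "n - 1"] by (auto intro: cmp_closed)
  ultimately show ?thesis
    using p \<open>0 < n\<close> hom.alt_sign_Suc by (simp add: degen_face_term_def)
qed

lemma kappa_eq_corner_terms:
  "kappa C Mf n = neg C (add C (face_degen_term n (0, Suc n)) (degen_face_term n (n, 0)))"
proof -
  define x where "x = cmp C (face Mf (Suc n) 0) (degen Mf n (Suc n))"
  have x: "x \<in> Hom C (Mo n) (Mo n)"
    unfolding x_def using face_hom[of "Suc n" 0] degen_hom[of "Suc n" n] by (auto intro: cmp_closed)
  have T0: "face_degen_term n (0, Suc n) = alt_sign (end_group n) (Suc n) x"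
    by (simp add: face_degen_term_def x_def)
  show ?thesis
  proof (cases "n = 0")
    case True
    then show ?thesis
      using x by (simp add: kappa_def x_def face_degen_term_def degen_face_term_def alt_sign_def
          hom_group_a_inv neg_neg hom.r_zero[simplified])
  next
    case False
    define y where "y = cmp C (degen Mf (n - 1) n) (face Mf n 0)"
    have y: "y \<in> Hom C (Mo n) (Mo n)"
      unfolding y_def using False face_hom[of n 0] degen_hom[of n "n - 1"] by (auto intro: cmp_closed)
    have U0: "degen_face_term n (n, 0) = alt_sign (end_group n) n y"
      using False by (simp add: degen_face_term_def y_def)
    have "kappa C Mf n = (if even n then add C x (neg C y) else neg C (add C x (neg C y)))"
      using False by (simp add: kappa_def x_def y_def)
    then show ?thesis
      unfolding T0 U0 using x y
      by (simp add: alt_sign_def hom_group_a_inv neg_add[where a="Mo n" and b="Mo n"] neg_neg)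
  qed
qed

theorem kappa_eq_id_minus_bd_db:
  "kappa C Mf n =
    add C (idm C (Mo n))
      (neg C (add C (cmp C (bop C Mf (n + 1)) (dop C Mf n))
                    (if n = 0 then zer C (Mo 0) (Mo 0)
                     else cmp C (dop C Mf (n - 1)) (bop C Mf n))))"
proof -
  let ?G = "end_group n"
  let ?c = "face_degen_term n (0, Suc n) \<oplus>\<^bsub>?G\<^esub> degen_face_term n (n, 0)"
  have "cmp C (bop C Mf (n + 1)) (dop C Mf n)
          \<oplus>\<^bsub>?G\<^esub> (if n = 0 then zer C (Mo 0) (Mo 0) else cmp C (dop C Mf (n - 1)) (bop C Mf n))
        = idm C (Mo n) \<oplus>\<^bsub>?G\<^esub> ?c"
    unfolding bop_cmp_dop dop_cmp_bop
    by (rule hom.finsum_grid_cancellation)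
      (simp_all add: face_degen_term_closed degen_face_term_closed idm_closed face_degen_term_diagonal
         face_degen_term_subdiagonal face_degen_term_exchange_index)
  moreover have "face_degen_term n (0, Suc n) \<in> Hom C (Mo n) (Mo n)" "degen_face_term n (n, 0) \<in> Hom C (Mo n) (Mo n)"
    using face_degen_term_closed[of n] degen_face_term_closed[of n] by auto
  moreover have "cmp C (bop C Mf (n + 1)) (dop C Mf n) \<in> Hom C (Mo n) (Mo n)"
    "(if n = 0 then zer C (Mo 0) (Mo 0) else cmp C (dop C Mf (n - 1)) (bop C Mf n)) \<in> Hom C (Mo n) (Mo n)"
    unfolding bop_cmp_dop dop_cmp_bop using face_degen_term_closed degen_face_term_closed by auto
  ultimately show ?thesis
    by (simp add: kappa_eq_corner_terms neg_add[where a="Mo n" and b="Mo n"]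
        add_neg_cancel[where a="Mo n" and b="Mo n"])
qed

end

theorem mainTheorem8:
  fixes C :: "('o,'m) preadd_cat"
    and Mo :: "nat \<Rightarrow> 'o"
    and Mf :: "nat \<Rightarrow> nat \<Rightarrow> (int \<Rightarrow> int) \<Rightarrow> 'm"
    and n :: nat
  assumes "preadditive C"
    and "duplicial C Mo Mf"
  shows "kappa C Mf n =
    add C (idm C (Mo n))
      (neg C (add C (cmp C (bop C Mf (n + 1)) (dop C Mf n))
                    (if n = 0 then zer C (Mo 0) (Mo 0)
                     else cmp C (dop C Mf (n - 1)) (bop C Mf n))))"
proof -
  interpret duplicial_module C Mo Mf
    using assms by (intro duplicial_module.intro preadditive_category.intro duplicial_module_axioms.intro)
  show ?thesis by (rule kappa_eq_id_minus_bd_db)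
qed

end
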